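(* Let $\mathcal{D}$ be the class of all finite digraphs and let $D\in\mathcal{D}$. The class $\mathrm{Av}(D)=\{E\in\mathcal{D}: D\not\preceq E\}$, with respect to the strong homomorphic image ordering $\preceq$, is well quasi-ordered if and only if $D$ is isomorphic to the complete digraph $\overrightarrow{K}_n$ for some $n\ge1$.
   Context: A digraph is a set $D$ with a binary relation $E(D)\subseteq D\times D$ (loops allowed). $\overrightarrow{K}_n$ is the digraph on $\{1,\dots,n\}$ with edge set $\{(i,j):1\le i,j\le n\}$ (all ordered pairs, including loops). A homomorphism maps edges to edges; it is strong if additionally every edge of the target between vertices of the image is the image of an edge. Strong homomorphic image ordering: $A\preceq B$ iff there is a surjective strong homomorphism $B\to A$. Well quasi-ordered means no infinite strictly decreasing sequence and no infinite antichain; digraphs considered up to isomorphism. *)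

theory Defs
  imports Main
begin

text \<open>A (finite) digraph is represented concretely by a vertex set of naturals and an
  edge relation on it (loops allowed). Every finite digraph is isomorphic to one of these.\<close>

type_synonym dg = "nat set \<times> (nat \<times> nat) set"

definition verts :: "dg \<Rightarrow> nat set" where "verts G = fst G"
definition arcs :: "dg \<Rightarrow> (nat \<times> nat) set" where "arcs G = snd G"

definition finite_digraph :: "dg \<Rightarrow> bool" where
  "finite_digraph G \<longleftrightarrow> finite (verts G) \<and> arcs G \<subseteq> verts G \<times> verts G"

definition strong_hom :: "dg \<Rightarrow> dg \<Rightarrow> (nat \<Rightarrow> nat) \<Rightarrow> bool" where
  "strong_hom G H f \<longleftrightarrow>
     (\<forall>x\<in>verts G. f x \<in> verts H) \<and>
     (\<forall>x y. (x, y) \<in> arcs G \<longrightarrow> (f x, f y) \<in> arcs H) \<and>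
     (\<forall>u\<in>f ` verts G. \<forall>v\<in>f ` verts G. (u, v) \<in> arcs H \<longrightarrow>
        (\<exists>x y. (x, y) \<in> arcs G \<and> f x = u \<and> f y = v))"

definition shi_le :: "dg \<Rightarrow> dg \<Rightarrow> bool" where
  "shi_le A B \<longleftrightarrow> (\<exists>f. strong_hom B A f \<and> f ` verts B = verts A)"

definition dg_iso :: "dg \<Rightarrow> dg \<Rightarrow> bool" where
  "dg_iso A B \<longleftrightarrow> (\<exists>f. bij_betw f (verts A) (verts B) \<and>
     (\<forall>x\<in>verts A. \<forall>y\<in>verts A. (x, y) \<in> arcs A \<longleftrightarrow> (f x, f y) \<in> arcs B))"

definition complete_digraph :: "nat \<Rightarrow> dg" where
  "complete_digraph n = ({1..n}, {1..n} \<times> {1..n})"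

definition Av :: "dg \<Rightarrow> dg set" where
  "Av D = {E. finite_digraph E \<and> \<not> shi_le D E}"

definition dg_wqo_class :: "dg set \<Rightarrow> bool" where
  "dg_wqo_class C \<longleftrightarrow>
     \<not> (\<exists>s :: nat \<Rightarrow> dg. (\<forall>i. s i \<in> C) \<and> (\<forall>i. shi_le (s (Suc i)) (s i) \<and> \<not> shi_le (s i) (s (Suc i)))) \<and>
     \<not> (\<exists>s :: nat \<Rightarrow> dg. (\<forall>i. s i \<in> C) \<and> (\<forall>i j. i \<noteq> j \<longrightarrow> \<not> shi_le (s i) (s j)))"

end

theory Submission
  imports Defs "HOL-Library.Ramsey"
begin

text \<open>If D is not complete (it is empty, misses a loop, or misses an arc between distinct
  vertices), the complements of directed cycles, taken all with loops or all without, avoid D;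
  they form an infinite antichain because a surjective strong homomorphism between two of them
  must be injective.

  Conversely, let D be complete on n vertices. A digraph in Av D has no matching of n^2 arcs,
  since such a matching maps onto D; hence it has a vertex cover of fewer than 2n^2 vertices.
  Off the cover only loops remain, so each outside vertex is described by its loop and its
  neighbours in the cover. Two such digraphs with isomorphic covers and the same occupied types
  are comparable once the numbers of vertices of each type are pointwise dominated, and a
  Ramsey argument (Dickson's lemma) provides such a pair in every sequence. Strictly descending
  chains are impossible because the number of vertices drops at every strict step.\<close>

definition co_cycle :: "bool \<Rightarrow> nat \<Rightarrow> dg" where
  "co_cycle l m = ({..<m}, {(x, y). x < m \<and> y < m \<and> y \<noteq> Suc x mod m \<and> (l \<or> x \<noteq> y)})"

lemma co_cycle_verts [simp]: "verts (co_cycle l m) = {..<m}"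
  by (simp add: co_cycle_def verts_def)

lemma co_cycle_arcs:
  "(x, y) \<in> arcs (co_cycle l m) \<longleftrightarrow> x < m \<and> y < m \<and> y \<noteq> Suc x mod m \<and> (l \<or> x \<noteq> y)"
  by (simp add: co_cycle_def arcs_def)

lemma finite_digraph_co_cycle: "finite_digraph (co_cycle l m)"
  by (auto simp: finite_digraph_def co_cycle_arcs)

lemma Suc_mod_inj:
  assumes "x < m" "x' < m" "Suc x mod m = Suc x' mod m"
  shows "x = x'"
  using assms by (auto simp: mod_if split: if_splits)

lemma Suc_mod_neq: "2 \<le> m \<Longrightarrow> x < m \<Longrightarrow> Suc x mod m \<noteq> x"
  by (simp add: mod_if)

lemma co_cycle_non_arc:
  assumes "x < m" "y < m" "x \<noteq> y" "(x, y) \<notin> arcs (co_cycle l m)"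
  shows "y = Suc x mod m"
  using assms by (auto simp: co_cycle_arcs)

lemma strong_hom_arc:
  "strong_hom G H f \<Longrightarrow> (x, y) \<in> arcs G \<Longrightarrow> (f x, f y) \<in> arcs H"
  by (simp add: strong_hom_def)

lemma strong_hom_reflect:
  assumes "strong_hom G H f" "x \<in> verts G" "y \<in> verts G" "(f x, f y) \<in> arcs H"
  obtains x' y' where "(x', y') \<in> arcs G" "f x' = f x" "f y' = f y"
  using assms unfolding strong_hom_def by blast

text \<open>If f identified x \<noteq> x', a preimage of the cycle successor of f x would be a
  non-neighbour of both x and x', hence their common cycle successor.\<close>
lemma shi_le_co_cycle_eq:
  assumes "2 \<le> k" "shi_le (co_cycle l k) (co_cycle l' m)"
  shows "m = k"
proof -
  obtain f where hom: "strong_hom (co_cycle l' m) (co_cycle l k) f" and onto: "f ` {..<m} = {..<k}"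
    using assms(2) by (auto simp: shi_le_def)
  have "inj_on f {..<m}"
  proof (rule inj_onI, rule ccontr)
    fix x x' assume x: "x \<in> {..<m}" and x': "x' \<in> {..<m}" and eq: "f x = f x'" and "x \<noteq> x'"
    define b' where "b' = Suc (f x) mod k"
    have "f x < k" using onto x by auto
    then have b'_neq: "b' \<noteq> f x" and no_arc: "(f x, b') \<notin> arcs (co_cycle l k)"
      using Suc_mod_neq[OF assms(1)] by (auto simp: b'_def co_cycle_arcs)
    have "b' \<in> f ` {..<m}"
      using onto assms(1) by (simp add: b'_def)
    then obtain y where y: "y < m" "f y = b'" by auto
    have "y = Suc z mod m" if "z \<in> {x, x'}" for z
    proof (rule co_cycle_non_arc)
      show "z < m" "y < m" "z \<noteq> y" using that x x' eq y b'_neq by auto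
      show "(z, y) \<notin> arcs (co_cycle l' m)"
        using strong_hom_arc[OF hom] that eq y no_arc by fastforce
    qed
    then have "y = Suc x mod m" "y = Suc x' mod m" by blast+
    then show False using Suc_mod_inj x x' \<open>x \<noteq> x'\<close> by auto
  qed
  then show ?thesis using onto card_image by fastforce
qed

lemma shi_le_loops:
  assumes "shi_le D E" "\<forall>x\<in>verts E. (x, x) \<in> arcs E"
  shows "\<forall>d\<in>verts D. (d, d) \<in> arcs D"
proof
  fix d assume "d \<in> verts D"
  obtain f where "strong_hom E D f" and "f ` verts E = verts D"
    using assms(1) by (auto simp: shi_le_def)
  then show "(d, d) \<in> arcs D"
    using \<open>d \<in> verts D\<close> assms(2) strong_hom_arc by (metis imageE)
qed

lemma co_cycle_True_loops:
  assumes "2 \<le> m"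
  shows "\<forall>x\<in>verts (co_cycle True m). (x, x) \<in> arcs (co_cycle True m)"
proof
  fix x assume "x \<in> verts (co_cycle True m)"
  then have "x < m" by simp
  moreover from this have "Suc x mod m \<noteq> x" by (rule Suc_mod_neq[OF assms])
  ultimately show "(x, x) \<in> arcs (co_cycle True m)" by (metis co_cycle_arcs)
qed

text \<open>The loop at a lifts to an arc x1 \<rightarrow> y1 of the loopless co-cycle over a, and a
  preimage of b is then a common non-neighbour of x1 \<noteq> y1.\<close>
lemma not_shi_le_co_cycle_False:
  assumes "a \<in> verts D" "(a, a) \<in> arcs D" "b \<in> verts D" "a \<noteq> b" "(a, b) \<notin> arcs D"
  shows "\<not> shi_le D (co_cycle False m)"
proof
  assume "shi_le D (co_cycle False m)"
  then obtain f where hom: "strong_hom (co_cycle False m) D f" and onto: "f ` {..<m} = verts D"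
    by (auto simp: shi_le_def)
  have "a \<in> f ` {..<m}" "b \<in> f ` {..<m}" using assms(1,3) onto by simp_all
  then obtain x y where x: "x < m" "f x = a" and y: "y < m" "f y = b" by blast
  obtain x1 y1 where arc1: "(x1, y1) \<in> arcs (co_cycle False m)" "f x1 = a" "f y1 = a"
    using strong_hom_reflect[OF hom, of x x] x assms(2) by auto
  then have x1y1: "x1 < m" "y1 < m" "x1 \<noteq> y1" by (simp_all add: co_cycle_arcs)
  have "y = Suc z mod m" if "z \<in> {x1, y1}" for z
  proof (rule co_cycle_non_arc)
    show "z < m" "y < m" "z \<noteq> y" using that x1y1 arc1 y assms(4) by auto
    show "(z, y) \<notin> arcs (co_cycle False m)"
      using strong_hom_arc[OF hom, of z y] that arc1 y assms(5) by auto
  qed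
  then have "y = Suc x1 mod m" "y = Suc y1 mod m" by blast+
  then show False using Suc_mod_inj x1y1 by auto
qed

lemma not_dg_wqo_class_if_antichain:
  fixes s :: "nat \<Rightarrow> dg"
  assumes "\<forall>i. s i \<in> C" "\<forall>i j. i \<noteq> j \<longrightarrow> \<not> shi_le (s i) (s j)"
  shows "\<not> dg_wqo_class C"
  unfolding dg_wqo_class_def using assms by blast

lemma not_dg_wqo_class_Av_if_avoids_co_cycles:
  assumes "\<forall>m\<ge>2. \<not> shi_le D (co_cycle l m)"
  shows "\<not> dg_wqo_class (Av D)"
proof (rule not_dg_wqo_class_if_antichain)
  show "\<forall>i. co_cycle l (i + 2) \<in> Av D"
    using assms by (simp add: Av_def finite_digraph_co_cycle)
  show "\<forall>i j. i \<noteq> j \<longrightarrow> \<not> shi_le (co_cycle l (i + 2)) (co_cycle l (j + 2))"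
    using shi_le_co_cycle_eq[of "_ + 2" l l "_ + 2"] by auto
qed

lemma not_dg_wqo_class_Av_if_incomplete:
  assumes "arcs D \<subseteq> verts D \<times> verts D" "\<not> (verts D \<noteq> {} \<and> arcs D = verts D \<times> verts D)"
  shows "\<not> dg_wqo_class (Av D)"
proof -
  obtain l where "\<forall>m\<ge>2. \<not> shi_le D (co_cycle l m)"
  proof (cases "verts D = {}")
    case True
    then have "\<not> shi_le D (co_cycle True m)" if "2 \<le> m" for m
      using that by (auto simp: shi_le_def lessThan_empty_iff)
    then show ?thesis using that by blast
  next
    case False
    then obtain a b where ab: "a \<in> verts D" "b \<in> verts D" "(a, b) \<notin> arcs D"
      using assms by auto
    show ?thesis
    proof (cases "\<forall>d\<in>verts D. (d, d) \<in> arcs D")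
      case True
      then have "\<not> shi_le D (co_cycle False m)" for m
        using ab not_shi_le_co_cycle_False[of a D b m] by auto
      then show ?thesis using that by blast
    next
      case False
      then have "\<not> shi_le D (co_cycle True m)" if "2 \<le> m" for m
        using shi_le_loops co_cycle_True_loops[OF that] by blast
      then show ?thesis using that by blast
    qed
  qed
  then show ?thesis by (rule not_dg_wqo_class_Av_if_avoids_co_cycles)
qed

lemma shi_le_card_le:
  assumes "finite_digraph B" "shi_le A B"
  shows "card (verts A) \<le> card (verts B)"
proof -
  obtain f where "f ` verts B = verts A" using assms(2) unfolding shi_le_def by blast
  moreover have "finite (verts B)" using assms(1) unfolding finite_digraph_def by blast
  ultimately show ?thesis using card_image_le by metis
qed

text \<open>Equal sizes make the surjection bijective, and its inverse is again strong.\<close>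
lemma shi_le_sym_if_card_eq:
  assumes "finite_digraph A" "finite_digraph B" "shi_le A B" "card (verts A) = card (verts B)"
  shows "shi_le B A"
proof -
  obtain f where hom: "strong_hom B A f" and onto: "f ` verts B = verts A"
    using assms(3) unfolding shi_le_def by blast
  have finB: "finite (verts B)" and arcsB: "arcs B \<subseteq> verts B \<times> verts B"
    and arcsA: "arcs A \<subseteq> verts A \<times> verts A"
    using assms(1,2) unfolding finite_digraph_def by blast+
  have "inj_on f (verts B)"
    using eq_card_imp_inj_on[OF finB, of f] onto assms(4) by simp
  then have bij: "bij_betw f (verts B) (verts A)"
    using onto by (simp add: bij_betw_def)
  define g where "g = inv_into (verts B) f"
  have g: "bij_betw g (verts A) (verts B)" and fg: "\<And>u. u \<in> verts A \<Longrightarrow> f (g u) = u"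
    and gf: "\<And>x. x \<in> verts B \<Longrightarrow> g (f x) = x"
    using bij bij_betw_inv_into bij_betw_inv_into_right bij_betw_inv_into_left
    unfolding g_def by fastforce+
  have "(u, v) \<in> arcs A \<longleftrightarrow> (g u, g v) \<in> arcs B" if uv: "u \<in> verts A" "v \<in> verts A" for u v
  proof
    assume "(u, v) \<in> arcs A"
    moreover have "u \<in> f ` verts B" "v \<in> f ` verts B" using onto uv by auto
    ultimately obtain x y where "(x, y) \<in> arcs B" "f x = u" "f y = v"
      using hom unfolding strong_hom_def by blast
    then show "(g u, g v) \<in> arcs B" using arcsB gf by auto
  next
    assume "(g u, g v) \<in> arcs B"
    then show "(u, v) \<in> arcs A" using strong_hom_arc[OF hom] fg uv by fastforce
  qed
  then have "strong_hom A B g"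
    using g arcsA unfolding strong_hom_def bij_betw_def by fastforce
  then show ?thesis using g unfolding shi_le_def bij_betw_def by blast
qed

lemma no_strictly_descending_chain:
  assumes "\<forall>i. finite_digraph (s i)"
  shows "\<not> (\<forall>i. shi_le (s (Suc i)) (s i) \<and> \<not> shi_le (s i) (s (Suc i)))"
proof
  assume desc: "\<forall>i. shi_le (s (Suc i)) (s i) \<and> \<not> shi_le (s i) (s (Suc i))"
  have "card (verts (s (Suc i))) < card (verts (s i))" for i
    using shi_le_card_le[of "s i" "s (Suc i)"] shi_le_sym_if_card_eq[of "s (Suc i)" "s i"]
      assms desc by fastforce
  then have "\<forall>i. ((card \<circ> verts \<circ> s) (Suc i), (card \<circ> verts \<circ> s) i) \<in> less_than" by simp
  then show False using wf_less_than wf_iff_no_infinite_down_chain by blast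
qed

definition matching :: "dg \<Rightarrow> nat list \<Rightarrow> nat list \<Rightarrow> bool" where
  "matching E xs ys \<longleftrightarrow>
     length xs = length ys \<and> distinct (xs @ ys) \<and> (\<forall>i<length xs. (xs ! i, ys ! i) \<in> arcs E)"

definition vertex_cover :: "dg \<Rightarrow> nat set \<Rightarrow> bool" where
  "vertex_cover E S \<longleftrightarrow>
     finite S \<and> S \<subseteq> verts E \<and> (\<forall>x y. (x, y) \<in> arcs E \<longrightarrow> x \<noteq> y \<longrightarrow> x \<in> S \<or> y \<in> S)"

lemma matching_or_vertex_cover:
  assumes "finite_digraph E"
  shows "(\<exists>xs ys. matching E xs ys \<and> length xs = k) \<or> (\<exists>S. vertex_cover E S \<and> card S < 2 * k)"
proof (induction k)
  case 0
  have "matching E [] []" by (simp add: matching_def)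
  then show ?case by auto
next
  case (Suc k)
  show ?case
  proof (cases "\<exists>S. vertex_cover E S \<and> card S < 2 * k")
    case True
    then show ?thesis by auto
  next
    case False
    then obtain xs ys where M: "matching E xs ys" "length xs = k"
      using Suc.IH by blast
    define S where "S = set xs \<union> set ys"
    have card_S: "card S = 2 * k"
      using M by (simp add: S_def matching_def card_Un_disjoint distinct_card)
    have "S \<subseteq> verts E"
      using M assms unfolding S_def matching_def finite_digraph_def
      by (force simp: in_set_conv_nth)
    show ?thesis
    proof (cases "vertex_cover E S")
      case True
      then show ?thesis using card_S by auto
    next
      case False
      then obtain x y where xy: "(x, y) \<in> arcs E" "x \<noteq> y" "x \<notin> S" "y \<notin> S"
        using \<open>S \<subseteq> verts E\<close> unfolding vertex_cover_def S_def by auto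
      have "matching E (xs @ [x]) (ys @ [y])"
        using M xy unfolding matching_def S_def
        by (auto simp: nth_append less_Suc_eq)
      then show ?thesis using M(2) by fastforce
    qed
  qed
qed

text \<open>Each ordered pair of vertices of D is the image of one matching arc; all other vertices
  are sent to an arbitrary vertex.\<close>
lemma complete_shi_le_if_matching:
  assumes "finite_digraph E" "finite (verts D)" "verts D \<noteq> {}" "arcs D = verts D \<times> verts D"
    and "matching E xs ys" "length xs = card (verts D \<times> verts D)"
  shows "shi_le D E"
proof -
  let ?V = "verts D" and ?N = "card (verts D \<times> verts D)"
  obtain p where p: "bij_betw p {..<?N} (?V \<times> ?V)"
    using assms(2) ex_bij_betw_nat_finite[of "?V \<times> ?V"] by (auto simp: atLeast0LessThan)
  obtain u0 where u0: "u0 \<in> ?V" using assms(3) by blast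
  have lens: "length ys = ?N" and dist: "distinct xs" "distinct ys" "set xs \<inter> set ys = {}"
    and arcs_xy: "\<And>i. i < ?N \<Longrightarrow> (xs ! i, ys ! i) \<in> arcs E"
    using assms(5,6) unfolding matching_def by auto
  define f where "f z = (if z \<in> set xs then fst (p (inv_into {..<?N} ((!) xs) z))
      else if z \<in> set ys then snd (p (inv_into {..<?N} ((!) ys) z)) else u0)" for z
  have "inj_on ((!) xs) {..<?N}" "inj_on ((!) ys) {..<?N}"
    using dist assms(6) lens by (auto simp: inj_on_def nth_eq_iff_index_eq)
  then have fx: "f (xs ! i) = fst (p i)" and fy: "f (ys ! i) = snd (p i)" if "i < ?N" for i
    using that dist assms(6) lens by (auto simp: f_def disjoint_iff)
  have p_in: "p i \<in> ?V \<times> ?V" if "i < ?N" for i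
    using p that by (auto simp: bij_betw_def)
  have f_in: "f z \<in> ?V" for z
  proof -
    have "z \<in> set zs \<Longrightarrow> length zs = ?N \<Longrightarrow> inv_into {..<?N} ((!) zs) z < ?N" for zs
      by (metis in_set_conv_nth inv_into_into lessThan_iff imageI)
    then show ?thesis using p_in u0 assms(6) lens unfolding f_def by (auto simp: mem_Times_iff)
  qed
  have pre: "\<exists>i<?N. p i = (u, v)" if "u \<in> ?V" "v \<in> ?V" for u v
    using p that unfolding bij_betw_def by force
  have xs_in_verts: "xs ! i \<in> verts E" if "i < ?N" for i
    using arcs_xy[OF that] assms(1) unfolding finite_digraph_def by blast
  have onto: "f ` verts E = ?V"
  proof
    show "?V \<subseteq> f ` verts E"
    proof
      fix u assume "u \<in> ?V"
      then obtain i where "i < ?N" "p i = (u, u)" using pre by blast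
      then show "u \<in> f ` verts E" using fx xs_in_verts by (metis fst_conv image_eqI)
    qed
  qed (use f_in in blast)
  have "strong_hom E D f"
    unfolding strong_hom_def
  proof (intro conjI ballI allI impI)
    fix u v assume "u \<in> f ` verts E" "v \<in> f ` verts E"
    then obtain i where "i < ?N" "p i = (u, v)" using pre onto by blast
    then show "\<exists>x y. (x, y) \<in> arcs E \<and> f x = u \<and> f y = v"
      using arcs_xy fx fy by (metis fst_conv snd_conv)
  qed (use f_in assms(4) in auto)
  then show ?thesis using onto unfolding shi_le_def by blast
qed

lemma vertex_cover_if_Av_complete:
  assumes "finite (verts D)" "verts D \<noteq> {}" "arcs D = verts D \<times> verts D" "E \<in> Av D"
  obtains S g where "vertex_cover E S" "card S < 2 * card (verts D \<times> verts D)"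
    "bij_betw g {..<card S} S"
proof -
  obtain S where S: "vertex_cover E S" "card S < 2 * card (verts D \<times> verts D)"
    using matching_or_vertex_cover[of E "card (verts D \<times> verts D)"]
      complete_shi_le_if_matching[OF _ assms(1-3)] assms(4) unfolding Av_def by blast
  moreover obtain g where "bij_betw g {..<card S} S"
    using S(1) ex_bij_betw_nat_finite unfolding vertex_cover_def lessThan_atLeast0 by blast
  ultimately show ?thesis using that by blast
qed

text \<open>With a vertex cover enumerated as g 0, \<dots>, g (k - 1), a vertex outside it is described up
  to the structure of the digraph by its loop and the indices of its in- and out-neighbours
  in the cover.\<close>
definition cover_type :: "dg \<Rightarrow> (nat \<Rightarrow> nat) \<Rightarrow> nat \<Rightarrow> nat \<Rightarrow> bool \<times> nat set \<times> nat set" where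
  "cover_type E g k v =
     ((v, v) \<in> arcs E, {i. i < k \<and> (g i, v) \<in> arcs E}, {i. i < k \<and> (v, g i) \<in> arcs E})"

definition vertices_of_type ::
    "dg \<Rightarrow> nat set \<Rightarrow> (nat \<Rightarrow> nat) \<Rightarrow> nat \<Rightarrow> bool \<times> nat set \<times> nat set \<Rightarrow> nat set" where
  "vertices_of_type E S g k t = {v \<in> verts E - S. cover_type E g k v = t}"

lemma cover_type_in_types: "k \<le> K \<Longrightarrow> cover_type E g k v \<in> UNIV \<times> Pow {..<K} \<times> Pow {..<K}"
  by (auto simp: cover_type_def)

lemma cover_type_eqD:
  assumes "cover_type E g k u = cover_type E' g' k v"
  shows "(u, u) \<in> arcs E \<longleftrightarrow> (v, v) \<in> arcs E'"
    and "i < k \<Longrightarrow> (g i, u) \<in> arcs E \<longleftrightarrow> (g' i, v) \<in> arcs E'"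
    and "i < k \<Longrightarrow> (u, g i) \<in> arcs E \<longleftrightarrow> (v, g' i) \<in> arcs E'"
  using assms by (auto simp: cover_type_def set_eq_iff)

text \<open>Arcs between two vertices outside the cover are loops, so it suffices that f preserves
  and reflects arcs at least one of whose ends lies in the cover.\<close>
lemma shi_le_via_vertex_covers:
  assumes "arcs E' \<subseteq> verts E' \<times> verts E'" "vertex_cover E' S'" "vertex_cover E (f ` S')"
    and onto: "f ` verts E' = verts E"
    and agree: "\<And>x y. x \<in> verts E' \<Longrightarrow> y \<in> verts E' \<Longrightarrow> x = y \<or> x \<in> S' \<or> y \<in> S' \<Longrightarrow>
      (x, y) \<in> arcs E' \<longleftrightarrow> (f x, f y) \<in> arcs E"
  shows "shi_le E E'"
proof -
  have S': "S' \<subseteq> verts E'" and cov': "\<And>x y. (x, y) \<in> arcs E' \<Longrightarrow> x \<noteq> y \<Longrightarrow> x \<in> S' \<or> y \<in> S'"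
    using assms(2) unfolding vertex_cover_def by blast+
  have cov: "\<And>u v. (u, v) \<in> arcs E \<Longrightarrow> u \<noteq> v \<Longrightarrow> u \<in> f ` S' \<or> v \<in> f ` S'"
    using assms(3) unfolding vertex_cover_def by blast
  have "\<exists>x y. (x, y) \<in> arcs E' \<and> f x = u \<and> f y = v"
    if uv: "u \<in> verts E" "v \<in> verts E" "(u, v) \<in> arcs E" for u v
  proof -
    obtain x y where x: "x \<in> verts E'" "f x = u" and y: "y \<in> verts E'" "f y = v"
      and "x = y \<or> x \<in> S' \<or> y \<in> S'"
    proof (cases "u = v")
      case True
      then show ?thesis using that uv onto by (metis imageE)
    next
      case False
      then consider "u \<in> f ` S'" | "v \<in> f ` S'" using cov uv by blast
      then show ?thesis using that uv onto S' by cases (metis imageE subsetD)+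
    qed
    then show ?thesis using agree uv by blast
  qed
  moreover have "(f x, f y) \<in> arcs E" if "(x, y) \<in> arcs E'" for x y
    using that agree cov' assms(1) by blast
  ultimately have "strong_hom E' E f"
    using onto unfolding strong_hom_def by blast
  then show ?thesis using onto unfolding shi_le_def by blast
qed

lemma ex_image_eq_if_card_le:
  assumes "finite A" "finite B" "card B \<le> card A" "B = {} \<Longrightarrow> A = {}"
  shows "\<exists>\<sigma>. \<sigma> ` A = B"
proof (cases "B = {}")
  case True
  then show ?thesis using assms(4) by simp
next
  case False
  then obtain b0 where b0: "b0 \<in> B" by blast
  obtain C where C: "C \<subseteq> A" "card C = card B"
    using obtain_subset_with_card_n[OF assms(3)] by metis
  then obtain h where h: "bij_betw h C B"
    using finite_same_card_bij assms(1,2) finite_subset by metis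
  have "(\<lambda>x. if x \<in> C then h x else b0) ` A = B"
    using h b0 C(1) unfolding bij_betw_def by (auto simp: image_iff)
  then show ?thesis by blast
qed

lemma type_preserving_surjection:
  assumes "finite (verts E)" "finite (verts E')"
    and dominated: "\<forall>t. card (vertices_of_type E S g k t) \<le> card (vertices_of_type E' S' g' k t) \<and>
      (vertices_of_type E S g k t = {} \<longleftrightarrow> vertices_of_type E' S' g' k t = {})"
  obtains h where "\<And>v. v \<in> verts E' - S' \<Longrightarrow>
      h v \<in> verts E - S \<and> cover_type E g k (h v) = cover_type E' g' k v"
    and "verts E - S \<subseteq> h ` (verts E' - S')"
proof -
  have "\<exists>\<sigma>. \<sigma> ` vertices_of_type E' S' g' k t = vertices_of_type E S g k t" for t
  proof (rule ex_image_eq_if_card_le)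
    show "finite (vertices_of_type E' S' g' k t)" "finite (vertices_of_type E S g k t)"
      using assms(1,2) by (simp_all add: vertices_of_type_def)
  qed (use dominated[THEN spec, of t] in auto)
  then obtain \<sigma> where \<sigma>: "\<And>t. \<sigma> t ` vertices_of_type E' S' g' k t = vertices_of_type E S g k t"
    by metis
  define h where "h v = \<sigma> (cover_type E' g' k v) v" for v
  have "h v \<in> verts E - S \<and> cover_type E g k (h v) = cover_type E' g' k v"
    if "v \<in> verts E' - S'" for v
  proof -
    have "v \<in> vertices_of_type E' S' g' k (cover_type E' g' k v)"
      using that by (simp add: vertices_of_type_def)
    then have "h v \<in> vertices_of_type E S g k (cover_type E' g' k v)"
      using \<sigma>[of "cover_type E' g' k v"] unfolding h_def by blast
    then show ?thesis by (simp add: vertices_of_type_def)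
  qed
  moreover have "verts E - S \<subseteq> h ` (verts E' - S')"
  proof
    fix u assume "u \<in> verts E - S"
    then have "u \<in> \<sigma> (cover_type E g k u) ` vertices_of_type E' S' g' k (cover_type E g k u)"
      using \<sigma> by (simp add: vertices_of_type_def)
    then obtain v where "v \<in> verts E' - S'" "cover_type E' g' k v = cover_type E g k u"
        "u = \<sigma> (cover_type E g k u) v"
      by (auto simp: vertices_of_type_def)
    then show "u \<in> h ` (verts E' - S')" unfolding h_def by force
  qed
  ultimately show ?thesis using that by blast
qed

text \<open>The map is g \<circ> g'\<inverse> on the cover and type-preserving outside it.\<close>
lemma shi_le_if_types_dominated:
  assumes E: "finite_digraph E" "vertex_cover E S" "bij_betw g {..<k} S"
    and E': "finite_digraph E'" "vertex_cover E' S'" "bij_betw g' {..<k} S'"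
    and same_cover: "\<forall>i<k. \<forall>j<k. (g i, g j) \<in> arcs E \<longleftrightarrow> (g' i, g' j) \<in> arcs E'"
    and dominated: "\<forall>t. card (vertices_of_type E S g k t) \<le> card (vertices_of_type E' S' g' k t) \<and>
      (vertices_of_type E S g k t = {} \<longleftrightarrow> vertices_of_type E' S' g' k t = {})"
  shows "shi_le E E'"
proof -
  obtain h where h_out: "\<And>v. v \<in> verts E' - S' \<Longrightarrow>
      h v \<in> verts E - S \<and> cover_type E g k (h v) = cover_type E' g' k v"
    and h_onto: "verts E - S \<subseteq> h ` (verts E' - S')"
    using type_preserving_surjection[OF _ _ dominated] E(1) E'(1)
    unfolding finite_digraph_def by blast
  define f where "f v = (if v \<in> S' then g (inv_into {..<k} g' v) else h v)" for v
  have f_g': "f (g' i) = g i" if "i < k" for i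
    using E'(3) that by (auto simp: f_def bij_betw_def)
  have f_S': "f ` S' = S"
    using E(3) E'(3) f_g' unfolding bij_betw_def by (metis image_image image_cong lessThan_iff)
  have f_out: "f v \<in> verts E - S \<and> cover_type E g k (f v) = cover_type E' g' k v"
    if "v \<in> verts E' - S'" for v
    using h_out[OF that] that by (simp add: f_def)
  have onto_out: "verts E - S \<subseteq> f ` (verts E' - S')"
    using h_onto by (auto simp: f_def)
  have S: "S \<subseteq> verts E" and S': "S' \<subseteq> verts E'"
    using E(2) E'(2) unfolding vertex_cover_def by blast+
  have onto: "f ` verts E' = verts E"
    using f_S' f_out onto_out S S' by blast
  have in_S': "\<exists>i<k. x = g' i" if "x \<in> S'" for x
    using E'(3) that unfolding bij_betw_def by blast
  have agree: "(x, y) \<in> arcs E' \<longleftrightarrow> (f x, f y) \<in> arcs E"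
    if xy: "x \<in> verts E'" "y \<in> verts E'" "x = y \<or> x \<in> S' \<or> y \<in> S'" for x y
  proof (cases "x \<in> S'"; cases "y \<in> S'")
    assume "x \<in> S'" "y \<in> S'"
    then obtain i j where "i < k" "j < k" "x = g' i" "y = g' j" using in_S' by blast
    then show ?thesis using f_g' same_cover by simp
  next
    assume "x \<in> S'" "y \<notin> S'"
    then obtain i where i: "i < k" "x = g' i" using in_S' by blast
    have "cover_type E g k (f y) = cover_type E' g' k y" using f_out xy \<open>y \<notin> S'\<close> by blast
    from cover_type_eqD(2)[OF this i(1)] show ?thesis using f_g' i by simp
  next
    assume "x \<notin> S'" "y \<in> S'"
    then obtain j where j: "j < k" "y = g' j" using in_S' by blast
    have "cover_type E g k (f x) = cover_type E' g' k x" using f_out xy \<open>x \<notin> S'\<close> by blast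
    from cover_type_eqD(3)[OF this j(1)] show ?thesis using f_g' j by simp
  next
    assume "x \<notin> S'" "y \<notin> S'"
    then have "x = y" "cover_type E g k (f x) = cover_type E' g' k x" using f_out xy by blast+
    with cover_type_eqD(1)[OF this(2)] show ?thesis by simp
  qed
  show ?thesis
  proof (rule shi_le_via_vertex_covers[OF _ E'(2) _ onto agree])
    show "arcs E' \<subseteq> verts E' \<times> verts E'" using E'(1) by (simp add: finite_digraph_def)
    show "vertex_cover E (f ` S')" using E(2) f_S' by simp
  qed
qed

lemma Ramsey_pairs:
  fixes f :: "nat \<Rightarrow> nat \<Rightarrow> 'c"
  assumes "finite C" "\<And>x y. x < y \<Longrightarrow> f x y \<in> C"
  obtains Y c where "infinite Y" "\<And>x y. x \<in> Y \<Longrightarrow> y \<in> Y \<Longrightarrow> x < y \<Longrightarrow> f x y = c"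
proof -
  obtain h where h: "bij_betw h C {0..<card C}" using ex_bij_betw_finite_nat[OF assms(1)] by blast
  define F where "F X = h (f (Min X) (Max X))" for X
  have F: "F {x, y} = h (f (min x y) (max x y))" for x y
    by (simp add: F_def)
  have "F {x, y} < card C" if "x \<noteq> y" for x y
    using that assms(2)[of "min x y" "max x y"] h unfolding F bij_betw_def by auto
  then obtain Y t where Y: "infinite Y" and hom: "\<forall>x\<in>Y. \<forall>y\<in>Y. x \<noteq> y \<longrightarrow> F {x, y} = t"
    using Ramsey2[OF infinite_UNIV_nat, of F "card C"] by blast
  obtain x0 y0 where x0y0: "x0 \<in> Y" "y0 \<in> Y" "x0 < y0"
    using Y by (metis infinite_nat_iff_unbounded not_finite_existsD)
  have "f x y = f x0 y0" if "x \<in> Y" "y \<in> Y" "x < y" for x y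
  proof -
    have "h (f x y) = h (f x0 y0)"
      using hom[rule_format, of x y] hom[rule_format, of x0 y0] that x0y0 by (simp add: F)
    moreover have "f x y \<in> C" "f x0 y0 \<in> C" using assms(2) that x0y0 by blast+
    ultimately show ?thesis using h unfolding bij_betw_def by (meson inj_onD)
  qed
  then show ?thesis using that Y by blast
qed

text \<open>Dickson's lemma for finitely coloured sequences: on an infinite Ramsey-homogeneous set,
  a coordinate that fails to increase once decreases strictly forever.\<close>
lemma pointwise_le_pair:
  fixes c :: "nat \<Rightarrow> 'a \<Rightarrow> nat" and col :: "nat \<Rightarrow> 'b"
  assumes "finite U" "finite (range col)"
  obtains i j where "i < j" "col i = col j" "\<forall>t\<in>U. c i t \<le> c j t"
proof -
  have "finite (range col \<times> range col \<times> Pow U)" using assms by simp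
  then obtain Y p where Y: "infinite Y"
    and hom: "\<And>x y. x \<in> Y \<Longrightarrow> y \<in> Y \<Longrightarrow> x < y \<Longrightarrow> (col x, col y, {t\<in>U. c x t \<le> c y t}) = p"
    using Ramsey_pairs[of _ "\<lambda>x y. (col x, col y, {t\<in>U. c x t \<le> c y t})"] by blast
  have above: "\<exists>y\<in>Y. x < y" for x
    using Y by (meson infinite_nat_iff_unbounded)
  then obtain x0 y0 where x0y0: "x0 \<in> Y" "y0 \<in> Y" "x0 < y0" by blast
  obtain z0 where "z0 \<in> Y" "y0 < z0" using above by blast
  then have "col x0 = col y0"
    using hom[OF x0y0] hom[of y0 z0] x0y0 by (metis fst_conv)
  show ?thesis
  proof (cases "\<forall>t\<in>U. c x0 t \<le> c y0 t")
    case True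
    then show ?thesis using that x0y0 \<open>col x0 = col y0\<close> by blast
  next
    case False
    then obtain t where "t \<in> U" "\<not> c x0 t \<le> c y0 t" by blast
    then have t: "t \<notin> snd (snd p)" using hom[OF x0y0] by auto
    have decreasing: "c y t < c x t" if "x \<in> Y" "y \<in> Y" "x < y" for x y
      using hom[OF that] t \<open>t \<in> U\<close> by auto
    obtain x where "x \<in> Y" and least: "\<And>y. y \<in> Y \<Longrightarrow> c x t \<le> c y t"
      using ex_has_least_nat[of "\<lambda>x. x \<in> Y" x0 "\<lambda>x. c x t"] x0y0 by blast
    moreover obtain y where "y \<in> Y" "x < y" using above by blast
    ultimately show ?thesis using decreasing least by (meson not_le)
  qed
qed

definition cover_colour ::
    "dg \<Rightarrow> nat set \<Rightarrow> (nat \<Rightarrow> nat) \<Rightarrow> nat \<times> (nat \<times> nat) set \<times> (bool \<times> nat set \<times> nat set) set"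
  where
  "cover_colour E S g =
     (card S, {(a, b). a < card S \<and> b < card S \<and> (g a, g b) \<in> arcs E},
      {t. vertices_of_type E S g (card S) t \<noteq> {}})"

lemma vertices_of_type_eq_empty:
  assumes "card S \<le> K" "t \<notin> UNIV \<times> Pow {..<K} \<times> Pow {..<K}"
  shows "vertices_of_type E S g (card S) t = {}"
  using cover_type_in_types[OF assms(1), of E g] assms(2) unfolding vertices_of_type_def by blast

lemma cover_colour_in:
  assumes "card S \<le> K"
  shows "cover_colour E S g \<in> {..K} \<times> Pow ({..<K} \<times> {..<K}) \<times> Pow (UNIV \<times> Pow {..<K} \<times> Pow {..<K})"
proof -
  have "{(a, b). a < card S \<and> b < card S \<and> (g a, g b) \<in> arcs E} \<subseteq> {..<K} \<times> {..<K}"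
    using assms by auto
  moreover have "{t. vertices_of_type E S g (card S) t \<noteq> {}} \<subseteq> UNIV \<times> Pow {..<K} \<times> Pow {..<K}"
    using vertices_of_type_eq_empty[OF assms] by blast
  ultimately show ?thesis using assms unfolding cover_colour_def by simp
qed

lemma shi_le_if_same_cover_colour:
  assumes E: "finite_digraph E" "vertex_cover E S" "bij_betw g {..<card S} S"
    and E': "finite_digraph E'" "vertex_cover E' S'" "bij_betw g' {..<card S'} S'"
    and same: "cover_colour E S g = cover_colour E' S' g'"
    and le: "\<forall>t. card (vertices_of_type E S g (card S) t) \<le> card (vertices_of_type E' S' g' (card S') t)"
  shows "shi_le E E'"
proof -
  have "card S = card S' \<and>
      {(a, b). a < card S \<and> b < card S \<and> (g a, g b) \<in> arcs E}
      = {(a, b). a < card S' \<and> b < card S' \<and> (g' a, g' b) \<in> arcs E'} \<and>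
      {t. vertices_of_type E S g (card S) t \<noteq> {}} = {t. vertices_of_type E' S' g' (card S') t \<noteq> {}}"
    using same unfolding cover_colour_def prod.inject by assumption
  note k = this[THEN conjunct1, symmetric]
    and arcs_eq = this[THEN conjunct2, THEN conjunct1]
    and types_eq = this[THEN conjunct2, THEN conjunct2]
  have same_arcs: "(g a, g b) \<in> arcs E \<longleftrightarrow> (g' a, g' b) \<in> arcs E'"
    if "a < card S" "b < card S" for a b
  proof -
    have "(a, b) \<in> {(a, b). a < card S \<and> b < card S \<and> (g a, g b) \<in> arcs E} \<longleftrightarrow>
      (a, b) \<in> {(a, b). a < card S' \<and> b < card S' \<and> (g' a, g' b) \<in> arcs E'}"
      by (simp only: arcs_eq)
    then show ?thesis using that k by simp
  qed
  have same_types: "vertices_of_type E S g (card S) t = {} \<longleftrightarrow>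
      vertices_of_type E' S' g' (card S) t = {}" for t
  proof -
    have "t \<in> {t. vertices_of_type E S g (card S) t \<noteq> {}} \<longleftrightarrow>
      t \<in> {t. vertices_of_type E' S' g' (card S') t \<noteq> {}}"
      by (simp only: types_eq)
    then show ?thesis using k by simp
  qed
  show ?thesis
  proof (rule shi_le_if_types_dominated[OF E(1,2) _ E'(1,2)])
    show "bij_betw g {..<card S} S" "bij_betw g' {..<card S} S'" using E(3) E'(3) k by simp_all
    show "\<forall>i<card S. \<forall>j<card S. (g i, g j) \<in> arcs E \<longleftrightarrow> (g' i, g' j) \<in> arcs E'"
      using same_arcs by blast
    show "\<forall>t. card (vertices_of_type E S g (card S) t) \<le> card (vertices_of_type E' S' g' (card S) t) \<and>
        (vertices_of_type E S g (card S) t = {} \<longleftrightarrow> vertices_of_type E' S' g' (card S) t = {})"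
      using le same_types k by simp
  qed
qed

text \<open>Every member of Av D has a vertex cover of bounded size, so up to the numbers of outside
  vertices of each type it carries one of finitely many colours.\<close>
lemma good_pair_in_Av_complete:
  fixes s :: "nat \<Rightarrow> dg"
  assumes "finite (verts D)" "verts D \<noteq> {}" "arcs D = verts D \<times> verts D" "\<forall>i. s i \<in> Av D"
  obtains i j where "i < j" "shi_le (s i) (s j)"
proof -
  define K where "K = 2 * card (verts D \<times> verts D)"
  have "\<exists>S g. vertex_cover (s i) S \<and> card S \<le> K \<and> bij_betw g {..<card S} S" for i
    using vertex_cover_if_Av_complete[OF assms(1-3)] assms(4) unfolding K_def
    by (metis less_imp_le)
  then obtain S g where cov: "\<And>i. vertex_cover (s i) (S i)" and small: "\<And>i. card (S i) \<le> K"
    and enum: "\<And>i. bij_betw (g i) {..<card (S i)} (S i)"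
    by metis
  define U where "U = (UNIV :: bool set) \<times> Pow {..<K} \<times> Pow {..<K}"
  define cls where "cls i = vertices_of_type (s i) (S i) (g i) (card (S i))" for i
  have "range (\<lambda>i. cover_colour (s i) (S i) (g i))
      \<subseteq> {..K} \<times> Pow ({..<K} \<times> {..<K}) \<times> Pow U"
    using cover_colour_in[OF small] unfolding U_def by blast
  then have "finite (range (\<lambda>i. cover_colour (s i) (S i) (g i)))"
    by (rule finite_subset) (simp add: U_def)
  moreover have "finite U" by (simp add: U_def)
  ultimately obtain i j where ij: "i < j" "cover_colour (s i) (S i) (g i) = cover_colour (s j) (S j) (g j)"
    "\<forall>t\<in>U. card (cls i t) \<le> card (cls j t)"
    using pointwise_le_pair[of U _ "\<lambda>i t. card (cls i t)"] by blast
  have "card (cls i t) \<le> card (cls j t)" for t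
    using ij(3) vertices_of_type_eq_empty[OF small] unfolding cls_def U_def
    by (cases "t \<in> U") (auto simp: U_def)
  then have "shi_le (s i) (s j)"
    using shi_le_if_same_cover_colour[OF _ cov enum _ cov enum ij(2)] assms(4)
    unfolding cls_def by (simp add: Av_def)
  then show ?thesis using that ij(1) by blast
qed

lemma dg_wqo_class_Av_complete:
  assumes "finite (verts D)" "verts D \<noteq> {}" "arcs D = verts D \<times> verts D"
  shows "dg_wqo_class (Av D)"
  unfolding dg_wqo_class_def
proof (intro conjI notI; elim exE conjE)
  fix s :: "nat \<Rightarrow> dg"
  assume "\<forall>i. s i \<in> Av D" "\<forall>i. shi_le (s (Suc i)) (s i) \<and> \<not> shi_le (s i) (s (Suc i))"
  then show False using no_strictly_descending_chain[of s] by (simp add: Av_def)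
next
  fix s :: "nat \<Rightarrow> dg"
  assume "\<forall>i. s i \<in> Av D" "\<forall>i j. i \<noteq> j \<longrightarrow> \<not> shi_le (s i) (s j)"
  then show False using good_pair_in_Av_complete[OF assms] by (metis less_irrefl)
qed

lemma iso_complete_digraph_iff:
  assumes "finite_digraph D"
  shows "(\<exists>n\<ge>1. dg_iso D (complete_digraph n)) \<longleftrightarrow> verts D \<noteq> {} \<and> arcs D = verts D \<times> verts D"
proof -
  have fin: "finite (verts D)" and arcs_D: "arcs D \<subseteq> verts D \<times> verts D"
    using assms unfolding finite_digraph_def by blast+
  have K: "verts (complete_digraph n) = {1..n}" "arcs (complete_digraph n) = {1..n} \<times> {1..n}" for n
    by (simp_all add: complete_digraph_def verts_def arcs_def)
  show ?thesis
  proof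
    assume "\<exists>n\<ge>1. dg_iso D (complete_digraph n)"
    then obtain n :: nat and g where "n \<ge> 1" "bij_betw g (verts D) {1..n}"
      and "\<forall>x\<in>verts D. \<forall>y\<in>verts D. (x, y) \<in> arcs D \<longleftrightarrow> (g x, g y) \<in> {1..n} \<times> {1..n}"
      unfolding dg_iso_def K by blast
    then show "verts D \<noteq> {} \<and> arcs D = verts D \<times> verts D"
      using arcs_D unfolding bij_betw_def by fastforce
  next
    assume complete: "verts D \<noteq> {} \<and> arcs D = verts D \<times> verts D"
    then have "card (verts D) \<ge> 1" using fin by (simp add: Suc_le_eq card_gt_0_iff)
    moreover obtain g where "bij_betw g (verts D) {1..card (verts D)}"
      using finite_same_card_bij[OF fin, of "{1..card (verts D)}"] by auto
    ultimately show "\<exists>n\<ge>1. dg_iso D (complete_digraph n)"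
      using complete unfolding dg_iso_def K bij_betw_def by blast
  qed
qed

theorem theorem4p3:
  assumes "finite_digraph D"
  shows "dg_wqo_class (Av D) \<longleftrightarrow> (\<exists>n\<ge>1. dg_iso D (complete_digraph n))"
proof -
  have "arcs D \<subseteq> verts D \<times> verts D" "finite (verts D)"
    using assms unfolding finite_digraph_def by blast+
  then show ?thesis
    using iso_complete_digraph_iff[OF assms] not_dg_wqo_class_Av_if_incomplete
      dg_wqo_class_Av_complete by blast
qed

end
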